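(* Let $V$ be a Poisson algebra over $\Bbbk$ with product $ab$ and bracket $[a,b]$, let $D$ be a derivation of $V$ (of both the product and the bracket), and let $V[t,t^{-1}]$ be the commutative algebra of Laurent polynomials over $V$. Then the bilinear map defined by $$[at^n,bt^m]=[a,b]t^{n+m}+\big(naD(b)-mbD(a)\big)t^{n+m-1},\qquad a,b\in V,\ n,m\in\mathbb Z,$$ is a Poisson bracket on $V[t,t^{-1}]$ (together with the usual commutative multiplication of Laurent polynomials).
   Context: $\Bbbk$ is a field of characteristic $0$. A Poisson algebra is a commutative associative algebra with a Lie bracket satisfying $[a,bc]=[a,b]c+b[a,c]$. *)

theory Defs
  imports Main "HOL-Library.Poly_Mapping"
begin

text \<open>A (not necessarily unital) commutative associative algebra over a field:
  the ring structure comes from the type class comm_ring, the scalar action is smul.\<close>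
definition comm_algebra_over :: "('k::field \<Rightarrow> 'a::comm_ring \<Rightarrow> 'a) \<Rightarrow> bool" where
  "comm_algebra_over smul \<longleftrightarrow>
     (\<forall>c d x. smul (c + d) x = smul c x + smul d x) \<and>
     (\<forall>c x y. smul c (x + y) = smul c x + smul c y) \<and>
     (\<forall>c d x. smul (c * d) x = smul c (smul d x)) \<and>
     (\<forall>x. smul 1 x = x) \<and>
     (\<forall>c x y. smul c (x * y) = smul c x * y)"

definition k_bilinear :: "('k::field \<Rightarrow> 'a::comm_ring \<Rightarrow> 'a) \<Rightarrow> ('a \<Rightarrow> 'a \<Rightarrow> 'a) \<Rightarrow> bool" where
  "k_bilinear smul br \<longleftrightarrow>
     (\<forall>x y z. br (x + y) z = br x z + br y z) \<and>
     (\<forall>x y z. br x (y + z) = br x y + br x z) \<and>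
     (\<forall>c x y. br (smul c x) y = smul c (br x y)) \<and>
     (\<forall>c x y. br x (smul c y) = smul c (br x y))"

definition poisson_bracket :: "('k::field \<Rightarrow> 'a::comm_ring \<Rightarrow> 'a) \<Rightarrow> ('a \<Rightarrow> 'a \<Rightarrow> 'a) \<Rightarrow> bool" where
  "poisson_bracket smul br \<longleftrightarrow>
     k_bilinear smul br \<and>
     (\<forall>x. br x x = 0) \<and>
     (\<forall>x y z. br x (br y z) + br y (br z x) + br z (br x y) = 0) \<and>
     (\<forall>x y z. br x (y * z) = br x y * z + y * br x z)"

definition poisson_algebra :: "('k::field \<Rightarrow> 'a::comm_ring \<Rightarrow> 'a) \<Rightarrow> ('a \<Rightarrow> 'a \<Rightarrow> 'a) \<Rightarrow> bool" where
  "poisson_algebra smul br \<longleftrightarrow> comm_algebra_over smul \<and> poisson_bracket smul br"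

definition poisson_derivation ::
  "('k::field \<Rightarrow> 'a::comm_ring \<Rightarrow> 'a) \<Rightarrow> ('a \<Rightarrow> 'a \<Rightarrow> 'a) \<Rightarrow> ('a \<Rightarrow> 'a) \<Rightarrow> bool" where
  "poisson_derivation smul br D \<longleftrightarrow>
     (\<forall>x y. D (x + y) = D x + D y) \<and>
     (\<forall>c x. D (smul c x) = smul c (D x)) \<and>
     (\<forall>x y. D (x * y) = D x * y + x * D y) \<and>
     (\<forall>x y. D (br x y) = br (D x) y + br x (D y))"

text \<open>Laurent polynomials V[t,t^-1] are finitely supported maps int to V; the coefficient
  at n is the coefficient of t^n. Their product (the poly_mapping convolution) is the usual
  product of Laurent polynomials.\<close>
definition laurent_smul :: "('k \<Rightarrow> 'v::comm_ring \<Rightarrow> 'v) \<Rightarrow> 'k \<Rightarrow> (int \<Rightarrow>\<^sub>0 'v) \<Rightarrow> (int \<Rightarrow>\<^sub>0 'v)" where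
  "laurent_smul smul c p = Poly_Mapping.map (smul c) p"

definition laurent_bracket ::
  "('k::field \<Rightarrow> 'v::comm_ring \<Rightarrow> 'v) \<Rightarrow> ('v \<Rightarrow> 'v \<Rightarrow> 'v) \<Rightarrow> ('v \<Rightarrow> 'v)
     \<Rightarrow> (int \<Rightarrow>\<^sub>0 'v) \<Rightarrow> (int \<Rightarrow>\<^sub>0 'v) \<Rightarrow> (int \<Rightarrow>\<^sub>0 'v)" where
  "laurent_bracket smul br D p q =
     (\<Sum>n\<in>Poly_Mapping.keys p. \<Sum>m\<in>Poly_Mapping.keys q.
        Poly_Mapping.single (n + m) (br (Poly_Mapping.lookup p n) (Poly_Mapping.lookup q m)) +
        Poly_Mapping.single (n + m - 1)
          (smul (of_int n) (Poly_Mapping.lookup p n * D (Poly_Mapping.lookup q m)) -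
           smul (of_int m) (Poly_Mapping.lookup q m * D (Poly_Mapping.lookup p n))))"

end

theory Submission
  imports Defs "HOL.Modules"
begin

text \<open>
  Let \<open>{_,_}\<close> be the coefficientwise bracket \<open>{a t^n, b t^m} = [a,b] t^(n+m)\<close>, let \<open>\<partial> = d/dt\<close>
  and let \<open>D'\<close> apply \<open>D\<close> to the coefficients. The bracket of the theorem is then
  \<open>{p,q} + \<partial>p D'q - \<partial>q D'p\<close>. Here \<open>{_,_}\<close> is a Poisson bracket, \<open>\<partial>\<close> and \<open>D'\<close> are commuting
  derivations of both the product and \<open>{_,_}\<close>, and for any Poisson bracket \<open>B\<close> with commuting
  derivations \<open>P\<close>, \<open>Q\<close> the twisted bracket \<open>B x y + P x Q y - P y Q x\<close> is again Poisson. All maps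
  involved are additive in each argument, so every identity on Laurent polynomials need only be
  checked on monomials \<open>a t^n\<close>.
\<close>

lemma additive_zero_fun: "additive (\<lambda>x. 0)"
  by (simp add: additive_def)

lemma additive_id: "additive (\<lambda>x. x)"
  by (simp add: additive_def)

lemma additive_add_fun: "additive f \<Longrightarrow> additive g \<Longrightarrow> additive (\<lambda>x. f x + g x)"
  by (simp add: additive_def algebra_simps)

lemma additive_diff_fun: "additive f \<Longrightarrow> additive g \<Longrightarrow> additive (\<lambda>x. f x - g x)"
  by (simp add: additive_def algebra_simps)

lemma additive_uminus_fun: "additive f \<Longrightarrow> additive (\<lambda>x. - f x)"
  by (simp add: additive_def)

lemma additive_compose: "additive f \<Longrightarrow> additive g \<Longrightarrow> additive (\<lambda>x. f (g x))"
  by (simp add: additive_def)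

lemma additive_mult_left: "additive f \<Longrightarrow> additive (\<lambda>x. c * f x :: 'b::ring)"
  by (simp add: additive_def algebra_simps)

lemma additive_mult_right: "additive f \<Longrightarrow> additive (\<lambda>x. f x * c :: 'b::ring)"
  by (simp add: additive_def algebra_simps)

lemma additive_single: "additive f \<Longrightarrow> additive (\<lambda>x. Poly_Mapping.single k (f x))"
  by (simp add: additive_def single_add)

lemmas additive_intros =
  additive_zero_fun additive_id additive_add_fun additive_diff_fun additive_uminus_fun
  additive_mult_left additive_mult_right additive_single

lemma poly_mapping_sum_single:
  "p = (\<Sum>k\<in>Poly_Mapping.keys p. Poly_Mapping.single k (Poly_Mapping.lookup p k))"
proof (rule poly_mapping_eqI)
  fix i
  have "Poly_Mapping.lookup (\<Sum>k\<in>Poly_Mapping.keys p. Poly_Mapping.single k (Poly_Mapping.lookup p k)) i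
      = (\<Sum>k\<in>Poly_Mapping.keys p. if k = i then Poly_Mapping.lookup p k else 0)"
    by (auto simp: lookup_sum lookup_single when_def intro: sum.cong)
  also have "\<dots> = Poly_Mapping.lookup p i"
    by (simp add: in_keys_iff)
  finally show "Poly_Mapping.lookup p i
      = Poly_Mapping.lookup (\<Sum>k\<in>Poly_Mapping.keys p. Poly_Mapping.single k (Poly_Mapping.lookup p k)) i"
    by simp
qed

lemma additive_poly_mapping_eqI:
  fixes F G :: "('i \<Rightarrow>\<^sub>0 'v::ab_group_add) \<Rightarrow> 'w::ab_group_add"
  assumes "additive F" "additive G"
    and "\<And>k v. F (Poly_Mapping.single k v) = G (Poly_Mapping.single k v)"
  shows "F = G"
proof
  fix p
  have "F p = (\<Sum>k\<in>Poly_Mapping.keys p. F (Poly_Mapping.single k (Poly_Mapping.lookup p k)))"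
    using additive.sum[OF assms(1)] poly_mapping_sum_single[of p] by metis
  moreover have "G p = (\<Sum>k\<in>Poly_Mapping.keys p. G (Poly_Mapping.single k (Poly_Mapping.lookup p k)))"
    using additive.sum[OF assms(2)] poly_mapping_sum_single[of p] by metis
  ultimately show "F p = G p"
    by (simp add: assms(3))
qed

lemma biadditive_poly_mapping_eqI:
  fixes F G :: "('i \<Rightarrow>\<^sub>0 'v::ab_group_add) \<Rightarrow> ('j \<Rightarrow>\<^sub>0 'u::ab_group_add) \<Rightarrow> 'w::ab_group_add"
  assumes "\<And>q. additive (\<lambda>p. F p q)" "\<And>p. additive (F p)"
    and "\<And>q. additive (\<lambda>p. G p q)" "\<And>p. additive (G p)"
    and "\<And>k v l w. F (Poly_Mapping.single k v) (Poly_Mapping.single l w)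
                 = G (Poly_Mapping.single k v) (Poly_Mapping.single l w)"
  shows "F = G"
proof (intro ext)
  fix p q
  have "F (Poly_Mapping.single k v) = G (Poly_Mapping.single k v)" for k v
    by (rule additive_poly_mapping_eqI) (use assms in auto)
  then have "(\<lambda>p. F p q) = (\<lambda>p. G p q)"
    by (intro additive_poly_mapping_eqI) (use assms in auto)
  then show "F p q = G p q"
    by metis
qed

lemma triadditive_poly_mapping_eqI:
  fixes F G :: "('i \<Rightarrow>\<^sub>0 'v::ab_group_add) \<Rightarrow> ('j \<Rightarrow>\<^sub>0 'u::ab_group_add) \<Rightarrow> ('l \<Rightarrow>\<^sub>0 't::ab_group_add)
    \<Rightarrow> 'w::ab_group_add"
  assumes "\<And>q r. additive (\<lambda>p. F p q r)" "\<And>p r. additive (\<lambda>q. F p q r)" "\<And>p q. additive (F p q)"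
    and "\<And>q r. additive (\<lambda>p. G p q r)" "\<And>p r. additive (\<lambda>q. G p q r)" "\<And>p q. additive (G p q)"
    and "\<And>k v l w i u. F (Poly_Mapping.single k v) (Poly_Mapping.single l w) (Poly_Mapping.single i u)
                     = G (Poly_Mapping.single k v) (Poly_Mapping.single l w) (Poly_Mapping.single i u)"
  shows "F = G"
proof (intro ext)
  fix p q r
  have "F (Poly_Mapping.single k v) = G (Poly_Mapping.single k v)" for k v
    by (rule biadditive_poly_mapping_eqI) (use assms in auto)
  then have "(\<lambda>p. F p q r) = (\<lambda>p. G p q r)"
    by (intro additive_poly_mapping_eqI) (use assms in auto)
  then show "F p q r = G p q r"
    by metis
qed

definition poly_mapping_extend :: "('i \<Rightarrow> 'v::zero \<Rightarrow> 'w::comm_monoid_add) \<Rightarrow> ('i \<Rightarrow>\<^sub>0 'v) \<Rightarrow> 'w" where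
  "poly_mapping_extend g p = (\<Sum>k\<in>Poly_Mapping.keys p. g k (Poly_Mapping.lookup p k))"

lemma poly_mapping_extend_superset:
  assumes "finite S" "Poly_Mapping.keys p \<subseteq> S" "\<And>k. g k 0 = 0"
  shows "poly_mapping_extend g p = (\<Sum>k\<in>S. g k (Poly_Mapping.lookup p k))"
  unfolding poly_mapping_extend_def
  by (rule sum.mono_neutral_left) (use assms in \<open>auto simp: in_keys_iff\<close>)

lemma poly_mapping_extend_single:
  "g k 0 = 0 \<Longrightarrow> poly_mapping_extend g (Poly_Mapping.single k v) = g k v"
  by (simp add: poly_mapping_extend_def)

lemma poly_mapping_extend_add_fun:
  "poly_mapping_extend (\<lambda>k v. g k v + h k v) p = poly_mapping_extend g p + poly_mapping_extend h p"
  by (simp add: poly_mapping_extend_def sum.distrib)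

lemma additive_poly_mapping_extend:
  fixes g :: "'i \<Rightarrow> 'v::ab_group_add \<Rightarrow> 'w::ab_group_add"
  assumes "\<And>k. additive (g k)"
  shows "additive (poly_mapping_extend g)"
proof (rule additive.intro)
  fix p q :: "'i \<Rightarrow>\<^sub>0 'v"
  let ?S = "Poly_Mapping.keys p \<union> Poly_Mapping.keys q"
  have g0: "g k 0 = 0" for k
    using additive.zero[OF assms] .
  have "poly_mapping_extend g (p + q) = (\<Sum>k\<in>?S. g k (Poly_Mapping.lookup (p + q) k))"
    by (rule poly_mapping_extend_superset) (use keys_add[of p q] g0 in auto)
  also have "\<dots> = (\<Sum>k\<in>?S. g k (Poly_Mapping.lookup p k)) + (\<Sum>k\<in>?S. g k (Poly_Mapping.lookup q k))"
    by (simp add: lookup_add additive.add[OF assms] sum.distrib)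
  also have "\<dots> = poly_mapping_extend g p + poly_mapping_extend g q"
    by (subst (1 2) poly_mapping_extend_superset[where S = ?S]) (use g0 in auto)
  finally show "poly_mapping_extend g (p + q) = poly_mapping_extend g p + poly_mapping_extend g q" .
qed

lemma additive_poly_mapping_extend_fun:
  assumes "\<And>k v. additive (\<lambda>x. g x k v)"
  shows "additive (\<lambda>x. poly_mapping_extend (g x) p)"
proof (rule additive.intro)
  fix x y
  have "g (x + y) = (\<lambda>k v. g x k v + g y k v)"
    by (intro ext) (rule additive.add[OF assms])
  then show "poly_mapping_extend (g (x + y)) p = poly_mapping_extend (g x) p + poly_mapping_extend (g y) p"
    by (simp add: poly_mapping_extend_add_fun)
qed

definition poly_mapping_extend2 ::
  "('i \<Rightarrow> 'j \<Rightarrow> 'v::zero \<Rightarrow> 'u::zero \<Rightarrow> 'w::comm_monoid_add)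
     \<Rightarrow> ('i \<Rightarrow>\<^sub>0 'v) \<Rightarrow> ('j \<Rightarrow>\<^sub>0 'u) \<Rightarrow> 'w" where
  "poly_mapping_extend2 H p q =
     poly_mapping_extend (\<lambda>k v. poly_mapping_extend (\<lambda>l u. H k l v u) q) p"

context
  fixes H :: "'i \<Rightarrow> 'j \<Rightarrow> 'v::ab_group_add \<Rightarrow> 'u::ab_group_add \<Rightarrow> 'w::ab_group_add"
  assumes additive_left: "\<And>k l u. additive (\<lambda>v. H k l v u)"
    and additive_right: "\<And>k l v. additive (H k l v)"
begin

lemma additive_poly_mapping_extend2_left: "additive (\<lambda>p. poly_mapping_extend2 H p q)"
  unfolding poly_mapping_extend2_def
  by (intro additive_poly_mapping_extend additive_poly_mapping_extend_fun additive_left)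

lemma additive_poly_mapping_extend2_right: "additive (poly_mapping_extend2 H p)"
  unfolding poly_mapping_extend2_def
  by (intro additive_poly_mapping_extend_fun additive_poly_mapping_extend additive_right)

lemma poly_mapping_extend2_single:
  "poly_mapping_extend2 H (Poly_Mapping.single k v) (Poly_Mapping.single l u) = H k l v u"
proof -
  have "poly_mapping_extend (\<lambda>l u. H k l 0 u) q = 0" for q
    using additive.zero[OF additive_poly_mapping_extend_fun[of "\<lambda>v l u. H k l v u"]] additive_left by blast
  then show ?thesis
    unfolding poly_mapping_extend2_def
    by (simp add: poly_mapping_extend_single additive.zero[OF additive_left] additive.zero[OF additive_right])
qed

end

locale poisson_ring =
  fixes B :: "'a::comm_ring \<Rightarrow> 'a \<Rightarrow> 'a"
  assumes add_left: "B (x + y) z = B x z + B y z"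
    and add_right: "B x (y + z) = B x y + B x z"
    and alternating: "B x x = 0"
    and jacobi: "B x (B y z) + B y (B z x) + B z (B x y) = 0"
    and leibniz: "B x (y * z) = B x y * z + y * B x z"
begin

lemma additive_left: "additive (\<lambda>x. B x y)"
  by (simp add: additive_def add_left)

lemma additive_right: "additive (B x)"
  by (simp add: additive_def add_right)

lemma antisym: "B x y = - B y x"
proof -
  have "0 = B (x + y) (x + y)"
    by (simp add: alternating)
  also have "\<dots> = B x x + B y x + (B x y + B y y)"
    by (simp only: add_left add_right)
  finally have "B x y + B y x = 0"
    by (simp add: alternating add.commute)
  then show ?thesis
    by (simp add: eq_neg_iff_add_eq_0)
qed

end

definition twisted_bracket ::
  "('a::comm_ring \<Rightarrow> 'a \<Rightarrow> 'a) \<Rightarrow> ('a \<Rightarrow> 'a) \<Rightarrow> ('a \<Rightarrow> 'a) \<Rightarrow> 'a \<Rightarrow> 'a \<Rightarrow> 'a" where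
  "twisted_bracket B P Q x y = B x y + P x * Q y - P y * Q x"

lemma (in poisson_ring) poisson_ring_twisted_bracket:
  assumes "additive P" "additive Q"
    and P_mult: "\<And>x y. P (x * y) = P x * y + x * P y"
    and Q_mult: "\<And>x y. Q (x * y) = Q x * y + x * Q y"
    and P_bracket: "\<And>x y. P (B x y) = B (P x) y + B x (P y)"
    and Q_bracket: "\<And>x y. Q (B x y) = B (Q x) y + B x (Q y)"
    and PQ_commute: "\<And>x. P (Q x) = Q (P x)"
  shows "poisson_ring (twisted_bracket B P Q)"
proof
  note P_add = additive.add[OF assms(1)] and P_diff = additive.diff[OF assms(1)]
  note Q_add = additive.add[OF assms(2)] and Q_diff = additive.diff[OF assms(2)]
  note B_diff = additive.diff[OF additive_right]
  fix x y z
  show "twisted_bracket B P Q (x + y) z = twisted_bracket B P Q x z + twisted_bracket B P Q y z"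
    by (simp add: twisted_bracket_def add_left P_add Q_add algebra_simps)
  show "twisted_bracket B P Q x (y + z) = twisted_bracket B P Q x y + twisted_bracket B P Q x z"
    by (simp add: twisted_bracket_def add_right P_add Q_add algebra_simps)
  show "twisted_bracket B P Q x x = 0"
    by (simp add: twisted_bracket_def alternating)
  show "twisted_bracket B P Q x (y * z) = twisted_bracket B P Q x y * z + y * twisted_bracket B P Q x z"
    by (simp add: twisted_bracket_def leibniz P_mult Q_mult algebra_simps)
  \<comment> \<open>After expanding by the derivation rules the B-terms form the Jacobi sum of B, and the
      remaining terms cancel in pairs by antisymmetry of B and commutation of P and Q.\<close>
  show "twisted_bracket B P Q x (twisted_bracket B P Q y z)
      + twisted_bracket B P Q y (twisted_bracket B P Q z x)
      + twisted_bracket B P Q z (twisted_bracket B P Q x y) = 0"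
    unfolding twisted_bracket_def
    by (simp only: add_right B_diff P_add P_diff Q_add Q_diff P_mult Q_mult P_bracket Q_bracket
        leibniz PQ_commute)
      (use jacobi[of x y z] in \<open>simp add: antisym[of "P x" y] antisym[of "P x" z] antisym[of "P y" x]
        antisym[of "P y" z] antisym[of "P z" x] antisym[of "P z" y] antisym[of "Q x" y] antisym[of "Q x" z]
        antisym[of "Q y" x] antisym[of "Q y" z] antisym[of "Q z" x] antisym[of "Q z" y] algebra_simps\<close>)
qed

lemma twisted_bracket_scale:
  assumes "additive S"
    and S_mult: "\<And>x y. S (x * y) = S x * y"
    and S_bracket_left: "\<And>x y. S (B x y) = B (S x) y"
    and S_bracket_right: "\<And>x y. S (B x y) = B x (S y)"
    and PS_commute: "\<And>x. P (S x) = S (P x)"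
    and QS_commute: "\<And>x. Q (S x) = S (Q x)"
  shows "twisted_bracket B P Q (S x) y = S (twisted_bracket B P Q x y)"
    and "twisted_bracket B P Q x (S y) = S (twisted_bracket B P Q x y)"
proof -
  have S_mult': "S (x * y) = x * S y" for x y
    using S_mult[of y x] by (simp add: mult.commute)
  note S_add = additive.add[OF assms(1)] and S_diff = additive.diff[OF assms(1)]
  show "twisted_bracket B P Q (S x) y = S (twisted_bracket B P Q x y)"
    by (simp add: twisted_bracket_def PS_commute QS_commute
        flip: S_add S_diff S_bracket_left S_mult S_mult')
  show "twisted_bracket B P Q x (S y) = S (twisted_bracket B P Q x y)"
    by (simp add: twisted_bracket_def PS_commute QS_commute
        flip: S_add S_diff S_bracket_right S_mult S_mult')
qed

lemma lookup_map_zero: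
  "f 0 = 0 \<Longrightarrow> Poly_Mapping.lookup (Poly_Mapping.map f p) k = f (Poly_Mapping.lookup p k)"
  by (simp add: map.rep_eq when_def)

lemma additive_poly_mapping_map: "additive f \<Longrightarrow> additive (Poly_Mapping.map f)"
  by (auto simp: additive_def lookup_map_zero additive.zero lookup_add intro!: poly_mapping_eqI)

locale laurent_poisson =
  fixes smul :: "'k::field_char_0 \<Rightarrow> 'v::comm_ring \<Rightarrow> 'v"
    and br :: "'v \<Rightarrow> 'v \<Rightarrow> 'v"
    and D :: "'v \<Rightarrow> 'v"
  assumes poisson: "poisson_algebra smul br"
    and derivation: "poisson_derivation smul br D"
begin

lemma scale_add_left: "smul (c + d) x = smul c x + smul d x"
  and scale_add_right: "smul c (x + y) = smul c x + smul c y"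
  and scale_scale: "smul (c * d) x = smul c (smul d x)"
  and scale_one: "smul 1 x = x"
  and scale_mult: "smul c (x * y) = smul c x * y"
  using poisson unfolding poisson_algebra_def comm_algebra_over_def by auto

lemma scale_mult_right: "smul c (x * y) = x * smul c y"
  by (metis scale_mult mult.commute)

lemma bracket_scale_left: "br (smul c x) y = smul c (br x y)"
  and bracket_scale_right: "br x (smul c y) = smul c (br x y)"
  using poisson unfolding poisson_algebra_def poisson_bracket_def k_bilinear_def by auto

sublocale V: poisson_ring br
  by unfold_locales
    (use poisson in \<open>auto simp: poisson_algebra_def poisson_bracket_def k_bilinear_def\<close>)

lemma D_add: "D (x + y) = D x + D y"
  and D_scale: "D (smul c x) = smul c (D x)"
  and D_mult: "D (x * y) = D x * y + x * D y"
  and D_bracket: "D (br x y) = br (D x) y + br x (D y)"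
  using derivation unfolding poisson_derivation_def by auto

lemma additive_scale: "additive (smul c)"
  by (simp add: additive_def scale_add_right)

lemma additive_D: "additive D"
  by (simp add: additive_def D_add)

lemmas additive_coeff_intros =
  additive_compose[OF additive_scale] additive_compose[OF additive_D]
  additive_compose[OF V.additive_left] additive_compose[OF V.additive_right]

definition coeff_bracket :: "(int \<Rightarrow>\<^sub>0 'v) \<Rightarrow> (int \<Rightarrow>\<^sub>0 'v) \<Rightarrow> (int \<Rightarrow>\<^sub>0 'v)" where
  "coeff_bracket = poly_mapping_extend2 (\<lambda>n m a b. Poly_Mapping.single (n + m) (br a b))"

definition t_deriv :: "(int \<Rightarrow>\<^sub>0 'v) \<Rightarrow> (int \<Rightarrow>\<^sub>0 'v)" where
  "t_deriv = poly_mapping_extend (\<lambda>n a. Poly_Mapping.single (n - 1) (smul (of_int n) a))"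

definition coeff_deriv :: "(int \<Rightarrow>\<^sub>0 'v) \<Rightarrow> (int \<Rightarrow>\<^sub>0 'v)" where
  "coeff_deriv = Poly_Mapping.map D"

lemma additive_coeff_bracket_left: "additive (\<lambda>p. coeff_bracket p q)"
  and additive_coeff_bracket_right: "additive (coeff_bracket p)"
  and coeff_bracket_single:
    "coeff_bracket (Poly_Mapping.single n a) (Poly_Mapping.single m b) = Poly_Mapping.single (n + m) (br a b)"
  unfolding coeff_bracket_def
  by (intro additive_poly_mapping_extend2_left additive_poly_mapping_extend2_right poly_mapping_extend2_single
      additive_intros additive_coeff_intros)+

lemma additive_t_deriv: "additive t_deriv"
  unfolding t_deriv_def by (intro additive_poly_mapping_extend additive_intros additive_coeff_intros)

lemma t_deriv_single: "t_deriv (Poly_Mapping.single n a) = Poly_Mapping.single (n - 1) (smul (of_int n) a)"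
  unfolding t_deriv_def by (simp add: poly_mapping_extend_single additive.zero[OF additive_scale])

lemma additive_coeff_deriv: "additive coeff_deriv"
  unfolding coeff_deriv_def by (rule additive_poly_mapping_map[OF additive_D])

lemma coeff_deriv_single: "coeff_deriv (Poly_Mapping.single n a) = Poly_Mapping.single n (D a)"
  unfolding coeff_deriv_def by (simp add: additive.zero[OF additive_D])

lemma additive_laurent_smul: "additive (laurent_smul smul c)"
  unfolding laurent_smul_def[abs_def] by (rule additive_poly_mapping_map[OF additive_scale])

lemma laurent_smul_single: "laurent_smul smul c (Poly_Mapping.single n a) = Poly_Mapping.single n (smul c a)"
  unfolding laurent_smul_def by (simp add: additive.zero[OF additive_scale])

lemmas additive_laurent_intros = additive_intros
  additive_compose[OF additive_coeff_bracket_left] additive_compose[OF additive_coeff_bracket_right]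
  additive_compose[OF additive_t_deriv] additive_compose[OF additive_coeff_deriv]
  additive_compose[OF additive_laurent_smul]

lemmas laurent_single_simps =
  coeff_bracket_single t_deriv_single coeff_deriv_single laurent_smul_single mult_single

lemma coeff_bracket_antisym: "coeff_bracket p q = - coeff_bracket q p"
proof -
  have "coeff_bracket = (\<lambda>p q. - coeff_bracket q p)"
  proof (rule biadditive_poly_mapping_eqI)
    fix n m :: int and a b :: 'v
    show "coeff_bracket (Poly_Mapping.single n a) (Poly_Mapping.single m b)
        = - coeff_bracket (Poly_Mapping.single m b) (Poly_Mapping.single n a)"
      by (simp add: coeff_bracket_single V.antisym[of a b] single_uminus add.commute)
  qed (intro additive_laurent_intros)+
  then show ?thesis
    by metis
qed

lemma coeff_bracket_alternating: "coeff_bracket p p = 0"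
proof (rule poly_mapping_eqI)
  fix k
  let ?c = "Poly_Mapping.lookup (coeff_bracket p p) k"
  have "?c + ?c = 0"
    using coeff_bracket_antisym[of p p] by (metis add_eq_0_iff lookup_uminus)
  \<comment> \<open>Antisymmetry only gives \<open>2c = 0\<close>; dividing by 2 is where \<open>char \<noteq> 2\<close> enters.\<close>
  have "?c = smul (1/2) ?c + smul (1/2) ?c"
    by (simp flip: scale_add_left add: scale_one)
  also have "\<dots> = 0"
    using \<open>?c + ?c = 0\<close> by (simp flip: scale_add_right add: additive.zero[OF additive_scale])
  finally show "?c = Poly_Mapping.lookup 0 k"
    by simp
qed

lemma coeff_bracket_jacobi:
  "coeff_bracket p (coeff_bracket q r) + coeff_bracket q (coeff_bracket r p)
    + coeff_bracket r (coeff_bracket p q) = 0"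
proof -
  have "(\<lambda>p q r. coeff_bracket p (coeff_bracket q r) + coeff_bracket q (coeff_bracket r p)
      + coeff_bracket r (coeff_bracket p q)) = (\<lambda>p q r. 0)"
    by (rule triadditive_poly_mapping_eqI)
      (intro additive_laurent_intros
        | simp add: coeff_bracket_single add_ac V.jacobi[unfolded add.assoc] flip: single_add)+
  then show ?thesis
    by metis
qed

lemma coeff_bracket_leibniz: "coeff_bracket p (q * r) = coeff_bracket p q * r + q * coeff_bracket p r"
proof -
  have "(\<lambda>p q r. coeff_bracket p (q * r)) = (\<lambda>p q r. coeff_bracket p q * r + q * coeff_bracket p r)"
    by (rule triadditive_poly_mapping_eqI)
      (intro additive_laurent_intros | simp add: laurent_single_simps add_ac V.leibniz flip: single_add)+
  then show ?thesis
    by metis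
qed

lemma t_deriv_mult: "t_deriv (p * q) = t_deriv p * q + p * t_deriv q"
proof -
  have "(\<lambda>p q. t_deriv (p * q)) = (\<lambda>p q. t_deriv p * q + p * t_deriv q)"
    by (rule biadditive_poly_mapping_eqI)
      (intro additive_laurent_intros
        | simp add: laurent_single_simps algebra_simps scale_add_left
            flip: single_add scale_mult scale_mult_right)+
  then show ?thesis
    by metis
qed

lemma t_deriv_bracket:
  "t_deriv (coeff_bracket p q) = coeff_bracket (t_deriv p) q + coeff_bracket p (t_deriv q)"
proof -
  have "(\<lambda>p q. t_deriv (coeff_bracket p q))
      = (\<lambda>p q. coeff_bracket (t_deriv p) q + coeff_bracket p (t_deriv q))"
    by (rule biadditive_poly_mapping_eqI)
      (intro additive_laurent_intros
        | simp add: laurent_single_simps algebra_simps scale_add_left bracket_scale_left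
            bracket_scale_right flip: single_add)+
  then show ?thesis
    by metis
qed

lemma coeff_deriv_mult: "coeff_deriv (p * q) = coeff_deriv p * q + p * coeff_deriv q"
proof -
  have "(\<lambda>p q. coeff_deriv (p * q)) = (\<lambda>p q. coeff_deriv p * q + p * coeff_deriv q)"
    by (rule biadditive_poly_mapping_eqI)
      (intro additive_laurent_intros | simp only: laurent_single_simps D_mult single_add)+
  then show ?thesis
    by metis
qed

lemma coeff_deriv_bracket:
  "coeff_deriv (coeff_bracket p q) = coeff_bracket (coeff_deriv p) q + coeff_bracket p (coeff_deriv q)"
proof -
  have "(\<lambda>p q. coeff_deriv (coeff_bracket p q))
      = (\<lambda>p q. coeff_bracket (coeff_deriv p) q + coeff_bracket p (coeff_deriv q))"
    by (rule biadditive_poly_mapping_eqI)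
      (intro additive_laurent_intros | simp only: laurent_single_simps D_bracket single_add)+
  then show ?thesis
    by metis
qed

lemma t_deriv_coeff_deriv: "t_deriv (coeff_deriv p) = coeff_deriv (t_deriv p)"
proof -
  have "(\<lambda>p. t_deriv (coeff_deriv p)) = (\<lambda>p. coeff_deriv (t_deriv p))"
    by (rule additive_poly_mapping_eqI)
      (intro additive_laurent_intros | simp add: laurent_single_simps D_scale)+
  then show ?thesis
    by metis
qed

lemma laurent_smul_coeff_bracket_left:
  "laurent_smul smul c (coeff_bracket p q) = coeff_bracket (laurent_smul smul c p) q"
proof -
  have "(\<lambda>p q. laurent_smul smul c (coeff_bracket p q)) = (\<lambda>p q. coeff_bracket (laurent_smul smul c p) q)"
    by (rule biadditive_poly_mapping_eqI)
      (intro additive_laurent_intros | simp add: laurent_single_simps bracket_scale_left)+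
  then show ?thesis
    by metis
qed

lemma laurent_smul_coeff_bracket_right:
  "laurent_smul smul c (coeff_bracket p q) = coeff_bracket p (laurent_smul smul c q)"
proof -
  have "(\<lambda>p q. laurent_smul smul c (coeff_bracket p q)) = (\<lambda>p q. coeff_bracket p (laurent_smul smul c q))"
    by (rule biadditive_poly_mapping_eqI)
      (intro additive_laurent_intros | simp add: laurent_single_simps bracket_scale_right)+
  then show ?thesis
    by metis
qed

lemma laurent_smul_mult: "laurent_smul smul c (p * q) = laurent_smul smul c p * q"
proof -
  have "(\<lambda>p q. laurent_smul smul c (p * q)) = (\<lambda>p q. laurent_smul smul c p * q)"
    by (rule biadditive_poly_mapping_eqI)
      (intro additive_laurent_intros | simp add: laurent_single_simps scale_mult)+
  then show ?thesis
    by metis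
qed

lemma t_deriv_laurent_smul: "t_deriv (laurent_smul smul c p) = laurent_smul smul c (t_deriv p)"
proof -
  have "(\<lambda>p. t_deriv (laurent_smul smul c p)) = (\<lambda>p. laurent_smul smul c (t_deriv p))"
    by (rule additive_poly_mapping_eqI)
      (intro additive_laurent_intros | simp add: laurent_single_simps mult.commute flip: scale_scale)+
  then show ?thesis
    by metis
qed

lemma coeff_deriv_laurent_smul: "coeff_deriv (laurent_smul smul c p) = laurent_smul smul c (coeff_deriv p)"
proof -
  have "(\<lambda>p. coeff_deriv (laurent_smul smul c p)) = (\<lambda>p. laurent_smul smul c (coeff_deriv p))"
    by (rule additive_poly_mapping_eqI)
      (intro additive_laurent_intros | simp add: laurent_single_simps D_scale)+
  then show ?thesis
    by metis
qed

lemma poisson_ring_coeff_bracket: "poisson_ring coeff_bracket"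
  by unfold_locales
    (simp_all add: additive.add[OF additive_coeff_bracket_left] additive.add[OF additive_coeff_bracket_right]
      coeff_bracket_alternating coeff_bracket_jacobi coeff_bracket_leibniz)

lemma laurent_bracket_eq_twisted_bracket:
  "laurent_bracket smul br D = twisted_bracket coeff_bracket t_deriv coeff_deriv"
proof -
  define H where "H n m a b = Poly_Mapping.single (n + m) (br a b)
    + Poly_Mapping.single (n + m - 1) (smul (of_int n) (a * D b) - smul (of_int m) (b * D a))" for n m a b
  have H_additive: "additive (\<lambda>a. H n m a b)" "additive (H n m a)" for n m a b
    unfolding H_def by (intro additive_intros additive_coeff_intros)+
  have "laurent_bracket smul br D = poly_mapping_extend2 H"
    unfolding laurent_bracket_def poly_mapping_extend2_def poly_mapping_extend_def H_def by (intro ext) (rule refl)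
  also have "\<dots> = twisted_bracket coeff_bracket t_deriv coeff_deriv"
  proof (rule biadditive_poly_mapping_eqI)
    fix n m :: int and a b :: 'v
    have "n - 1 + m = n + m - 1" "m - 1 + n = n + m - 1"
      by simp_all
    then show "poly_mapping_extend2 H (Poly_Mapping.single n a) (Poly_Mapping.single m b)
        = twisted_bracket coeff_bracket t_deriv coeff_deriv (Poly_Mapping.single n a) (Poly_Mapping.single m b)"
      by (simp only: poly_mapping_extend2_single[OF H_additive] twisted_bracket_def laurent_single_simps H_def
          single_diff scale_mult add_diff_eq)
  qed (simp_all only: twisted_bracket_def[abs_def] additive_poly_mapping_extend2_left additive_poly_mapping_extend2_right
      H_additive, (intro additive_laurent_intros)+)
  finally show ?thesis .
qed

lemma comm_algebra_laurent_smul: "comm_algebra_over (laurent_smul smul)"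
proof -
  have lookup_laurent_smul: "Poly_Mapping.lookup (laurent_smul smul c p) k = smul c (Poly_Mapping.lookup p k)"
    for c p k
    unfolding laurent_smul_def by (simp add: lookup_map_zero additive.zero[OF additive_scale])
  show ?thesis
    unfolding comm_algebra_over_def
    by (intro conjI allI poly_mapping_eqI)
      (simp_all add: lookup_laurent_smul lookup_add scale_add_left scale_add_right scale_scale scale_one
        laurent_smul_mult)
qed

lemma poisson_ring_laurent_bracket: "poisson_ring (laurent_bracket smul br D)"
  unfolding laurent_bracket_eq_twisted_bracket
  by (rule poisson_ring.poisson_ring_twisted_bracket[where P = t_deriv and Q = coeff_deriv,
        OF poisson_ring_coeff_bracket additive_t_deriv additive_coeff_deriv t_deriv_mult coeff_deriv_mult
        t_deriv_bracket coeff_deriv_bracket t_deriv_coeff_deriv])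

theorem poisson_algebra_laurent: "poisson_algebra (laurent_smul smul) (laurent_bracket smul br D)"
proof -
  interpret L: poisson_ring "laurent_bracket smul br D"
    by (rule poisson_ring_laurent_bracket)
  have "laurent_bracket smul br D (laurent_smul smul c p) q = laurent_smul smul c (laurent_bracket smul br D p q)"
    and "laurent_bracket smul br D p (laurent_smul smul c q) = laurent_smul smul c (laurent_bracket smul br D p q)"
    for c p q
    unfolding laurent_bracket_eq_twisted_bracket
    by (rule twisted_bracket_scale[where S = "laurent_smul smul c" and B = coeff_bracket and P = t_deriv
          and Q = coeff_deriv, OF additive_laurent_smul laurent_smul_mult laurent_smul_coeff_bracket_left
          laurent_smul_coeff_bracket_right t_deriv_laurent_smul coeff_deriv_laurent_smul])+
  then show ?thesis
    unfolding poisson_algebra_def poisson_bracket_def k_bilinear_def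
    by (simp add: comm_algebra_laurent_smul L.add_left L.add_right L.alternating L.jacobi L.leibniz)
qed

end

theorem mainTheorem4:
  fixes smul :: "'k::field_char_0 \<Rightarrow> 'v::comm_ring \<Rightarrow> 'v"
    and br :: "'v \<Rightarrow> 'v \<Rightarrow> 'v"
    and D :: "'v \<Rightarrow> 'v"
  assumes "poisson_algebra smul br"
    and "poisson_derivation smul br D"
  shows "poisson_algebra (laurent_smul smul) (laurent_bracket smul br D)"
proof -
  interpret laurent_poisson smul br D
    using assms by unfold_locales
  show ?thesis
    by (rule poisson_algebra_laurent)
qed

end
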